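(* Let $(x,q)\in\mathbf J$ and suppose $q$ is not an integer. Then: (i) for each positive integer $m$ there exists a neighborhood $\mathbf W\subset\mathbb R^2$ of $(x,q)$ such that $b_1(y,r)\ldots b_m(y,r)\le b_1(x,q)\ldots b_m(x,q)$ (lexicographically) for all $(y,r)\in\mathbf W\cap\mathbf J$; (ii) if $(y_n,r_n)$ is a sequence in $\mathbf J$ converging to $(x,q)$ from above (i.e. $y_n\ge x$ and $r_n\ge q$ for all $n$), then the sequences $(b_i(y_n,r_n))_{i\ge1}$ converge coordinate-wise to $(b_i(x,q))_{i\ge1}$ as $n\to\infty$.
   Context: For real $q>1$ let $\lceil q\rceil$ be the smallest integer $\ge q$ and $A_q=\{0,\ldots,\lceil q\rceil-1\}$. Let $\mathbf J$ be the set of $(x,q)$ with $q>1$ and $x\in J_q:=[0,(\lceil q\rceil-1)/(q-1)]$. For $(x,q)\in\mathbf J$, the greedy expansion $(b_i(x,q))$ is defined recursively: $b_n(x,q)$ is the largest element of $A_q$ with $\sum_{i=1}^n b_i(x,q)q^{-i}\le x$. Finite words of equal length are compared lexicographically. *)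

theory Defs
  imports "HOL-Analysis.Analysis"
begin

definition JJ :: "(real \<times> real) set" where
  "JJ = {(x, q). q > 1 \<and> 0 \<le> x \<and> x \<le> (real_of_int \<lceil>q\<rceil> - 1) / (q - 1)}"

fun greedy_prefix :: "real \<Rightarrow> real \<Rightarrow> nat \<Rightarrow> nat list" where
  "greedy_prefix x q 0 = []"
| "greedy_prefix x q (Suc n) =
     (let w = greedy_prefix x q n;
          s = (\<Sum>i<n. real (w ! i) / q ^ (i + 1))
      in w @ [GREATEST d. d < nat \<lceil>q\<rceil> \<and> s + real d / q ^ (n + 1) \<le> x])"

definition greedy_digit :: "nat \<Rightarrow> real \<Rightarrow> real \<Rightarrow> nat" where
  "greedy_digit i x q = greedy_prefix x q i ! (i - 1)"

definition lex_le :: "nat list \<Rightarrow> nat list \<Rightarrow> bool" where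
  "lex_le u v \<longleftrightarrow> u = v \<or>
     (\<exists>k < min (length u) (length v). take k u = take k v \<and> u ! k < v ! k)"

end

theory Submission
  imports Defs
begin

text \<open>
  Since \<open>q\<close> is not an integer, every base \<open>r\<close> near \<open>q\<close> has \<open>\<lceil>r\<rceil> = \<lceil>q\<rceil>\<close>, hence the same
  digit alphabet. Suppose the expansions of \<open>(x, q)\<close> and \<open>(y, r)\<close> agree before position \<open>k\<close>,
  and let \<open>d\<close> be the \<open>k\<close>-th digit of \<open>(x, q)\<close>. If \<open>d + 1\<close> is a digit, greediness gives the
  strict inequality \<open>x < S + (d + 1) / q ^ k\<close>, \<open>S\<close> the value of the common digits. It is an
  open condition in \<open>(x, q)\<close> and forbids a \<open>k\<close>-th digit above \<open>d\<close> at nearby \<open>(y, r)\<close>; this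
  gives (i). If moreover \<open>x \<le> y\<close> and \<open>q \<le> r\<close>, the value of the common digits in base \<open>r\<close> is
  smaller, so \<open>d\<close> is still admissible at \<open>(y, r)\<close> and the greedy digit there is at least
  \<open>d\<close>. Hence near \<open>(x, q)\<close> and from above the first digits coincide, which gives (ii).
\<close>

text \<open>\<open>digit x q k\<close> is the paper's \<open>b\<^sub>k\<^sub>+\<^sub>1(x, q)\<close>: digits are indexed from 0.\<close>

definition digit :: "real \<Rightarrow> real \<Rightarrow> nat \<Rightarrow> nat" where
  "digit x q k = greedy_prefix x q (Suc k) ! k"

definition digit_sum :: "(nat \<Rightarrow> nat) \<Rightarrow> real \<Rightarrow> nat \<Rightarrow> real" where
  "digit_sum c q n = (\<Sum>i<n. real (c i) / q ^ (i + 1))"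

lemma greedy_prefix_eq_map: "greedy_prefix x q n = map (digit x q) [0..<n]"
proof (induction n)
  case 0
  then show ?case by simp
next
  case (Suc n)
  then have "greedy_prefix x q (Suc n) = map (digit x q) [0..<n] @ [digit x q n]"
    by (simp add: Let_def digit_def nth_append)
  then show ?case by simp
qed

lemma length_greedy_prefix [simp]: "length (greedy_prefix x q n) = n"
  by (simp add: greedy_prefix_eq_map)

lemma greedy_digit_Suc: "greedy_digit (Suc k) x q = digit x q k"
  by (simp add: greedy_digit_def greedy_prefix_eq_map nth_append del: greedy_prefix.simps)

lemma map_greedy_digit: "map (\<lambda>i. greedy_digit i x q) [1..<m+1] = map (digit x q) [0..<m]"
proof -
  have "[1..<m+1] = map Suc [0..<m]" by (simp add: map_Suc_upt)
  then show ?thesis by (simp add: greedy_digit_Suc)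
qed

lemma digit_eq_Greatest:
  "digit x q n = (GREATEST d. d < nat \<lceil>q\<rceil> \<and> digit_sum (digit x q) q n + real d / q ^ (n + 1) \<le> x)"
proof -
  have "(\<Sum>i<n. real (greedy_prefix x q n ! i) / q ^ (i + 1)) = digit_sum (digit x q) q n"
    unfolding digit_sum_def by (rule sum.cong) (simp_all add: greedy_prefix_eq_map)
  then show ?thesis
    by (simp add: digit_def Let_def nth_append del: greedy_prefix.simps(1))
qed

lemma digit_sum_Suc [simp]: "digit_sum c q (Suc n) = digit_sum c q n + real (c n) / q ^ (n + 1)"
  by (simp add: digit_sum_def)

lemma digit_greatest:
  assumes "q > 0" "digit_sum (digit x q) q n \<le> x"
  shows "digit x q n < nat \<lceil>q\<rceil> \<and> digit_sum (digit x q) q (Suc n) \<le> x"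
    and "\<And>d. d < nat \<lceil>q\<rceil> \<Longrightarrow> digit_sum (digit x q) q n + real d / q ^ (n + 1) \<le> x \<Longrightarrow> d \<le> digit x q n"
proof -
  let ?P = "\<lambda>d. d < nat \<lceil>q\<rceil> \<and> digit_sum (digit x q) q n + real d / q ^ (n + 1) \<le> x"
  have "?P 0" using assms by simp
  then have "?P (digit x q n)"
    unfolding digit_eq_Greatest[of x q n] by (rule GreatestI_nat[where b = "nat \<lceil>q\<rceil>"]) simp
  then show "digit x q n < nat \<lceil>q\<rceil> \<and> digit_sum (digit x q) q (Suc n) \<le> x"
    by simp
  show "d \<le> digit x q n"
    if "d < nat \<lceil>q\<rceil>" "digit_sum (digit x q) q n + real d / q ^ (n + 1) \<le> x" for d
    using Greatest_le_nat[of ?P d "nat \<lceil>q\<rceil>"] that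
    unfolding digit_eq_Greatest[of x q n] by auto
qed

lemma digit_sum_greedy_le: "q > 0 \<Longrightarrow> 0 \<le> x \<Longrightarrow> digit_sum (digit x q) q n \<le> x"
proof (induction n)
  case 0
  then show ?case by (simp add: digit_sum_def)
next
  case (Suc n)
  then show ?case using digit_greatest(1) by blast
qed

lemma digit_less_ceiling: "q > 0 \<Longrightarrow> 0 \<le> x \<Longrightarrow> digit x q n < nat \<lceil>q\<rceil>"
  using digit_greatest(1) digit_sum_greedy_le by blast

lemma le_digit_iff:
  assumes "q > 0" "0 \<le> x" "d < nat \<lceil>q\<rceil>"
  shows "d \<le> digit x q n \<longleftrightarrow> digit_sum (digit x q) q n + real d / q ^ (n + 1) \<le> x"
proof
  assume "d \<le> digit x q n"
  then have "real d / q ^ (n + 1) \<le> real (digit x q n) / q ^ (n + 1)"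
    using assms(1) by (simp add: divide_right_mono)
  moreover have "digit_sum (digit x q) q (Suc n) \<le> x"
    using digit_greatest(1)[OF assms(1) digit_sum_greedy_le[OF assms(1,2)]] by blast
  ultimately show "digit_sum (digit x q) q n + real d / q ^ (n + 1) \<le> x"
    unfolding digit_sum_Suc by linarith
qed (use assms digit_greatest(2) digit_sum_greedy_le in blast)

lemma digit_sum_antimono_base:
  assumes "0 < q" "q \<le> r"
  shows "digit_sum c r n \<le> digit_sum c q n"
  unfolding digit_sum_def
proof (rule sum_mono)
  fix i
  have "q ^ (i + 1) \<le> r ^ (i + 1)" by (rule power_mono) (use assms in auto)
  then show "real (c i) / r ^ (i + 1) \<le> real (c i) / q ^ (i + 1)"
    using assms by (simp add: divide_left_mono)
qed

lemma digit_mono_above: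
  assumes "0 \<le> x" "x \<le> y" "0 < q" "q \<le> r" "\<lceil>r\<rceil> = \<lceil>q\<rceil>"
    and prefix: "\<forall>i<k. digit y r i = digit x q i"
  shows "digit x q k \<le> digit y r k"
proof -
  let ?d = "digit x q k"
  have "digit_sum (digit y r) r k = digit_sum (digit x q) r k"
    unfolding digit_sum_def using prefix by (intro sum.cong) auto
  also have "\<dots> \<le> digit_sum (digit x q) q k"
    using assms(3,4) by (rule digit_sum_antimono_base)
  finally have sum_le: "digit_sum (digit y r) r k \<le> digit_sum (digit x q) q k" .
  have "q ^ (k + 1) \<le> r ^ (k + 1)" by (rule power_mono) (use assms in auto)
  then have "real ?d / r ^ (k + 1) \<le> real ?d / q ^ (k + 1)"
    using assms(3,4) by (intro divide_left_mono) (auto intro!: mult_pos_pos)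
  with sum_le have "digit_sum (digit y r) r k + real ?d / r ^ (k + 1)
      \<le> digit_sum (digit x q) q (Suc k)"
    unfolding digit_sum_Suc by linarith
  also have "\<dots> \<le> x"
    using digit_greatest(1) assms(1,3) digit_sum_greedy_le by blast
  finally have "digit_sum (digit y r) r k + real ?d / r ^ (k + 1) \<le> y"
    using assms(2) by linarith
  moreover have "?d < nat \<lceil>r\<rceil>"
    using digit_less_ceiling assms(1,3,5) by simp
  ultimately show ?thesis
    using le_digit_iff[of r y ?d k] assms(1-5) by simp
qed

lemma open_below_digit_bound:
  "open {p :: real \<times> real. 1 < snd p \<and> fst p < digit_sum c (snd p) k + a / snd p ^ (k + 1)}"
proof -
  let ?f = "\<lambda>p :: real \<times> real. digit_sum c (snd p) k + a / snd p ^ (k + 1) - fst p"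
  have "continuous_on {p. 1 < snd p} ?f"
    unfolding digit_sum_def by (intro continuous_intros) auto
  moreover have "open {p :: real \<times> real. 1 < snd p}"
    by (intro open_Collect_less continuous_intros)
  ultimately have "open ({p. 1 < snd p} \<inter> ?f -` {0<..})"
    by (simp add: continuous_open_preimage)
  moreover have "{p. 1 < snd p} \<inter> ?f -` {0<..}
      = {p. 1 < snd p \<and> fst p < digit_sum c (snd p) k + a / snd p ^ (k + 1)}"
    by auto
  ultimately show ?thesis by simp
qed

lemma ceiling_eq_if_between:
  fixes q r :: real
  assumes "q \<notin> \<int>" "\<lfloor>q\<rfloor> < r" "r < \<lceil>q\<rceil>"
  shows "\<lceil>r\<rceil> = \<lceil>q\<rceil>"
proof -
  have "\<lceil>q\<rceil> = \<lfloor>q\<rfloor> + 1" using assms(1)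
    by (metis Ints_of_int ceiling_altdef)
  moreover have "\<lceil>r\<rceil> \<le> \<lceil>q\<rceil>" using assms(3) by (simp add: ceiling_le_iff)
  moreover have "\<lfloor>q\<rfloor> < \<lceil>r\<rceil>" using assms(2)
    by (meson le_of_int_ceiling less_le_trans of_int_less_iff)
  ultimately show ?thesis by linarith
qed

lemma greedy_digits_upper_nhd:
  assumes "(x, q) \<in> JJ" "q \<notin> \<int>"
  obtains W where "open W" "(x, q) \<in> W"
    "\<And>y r. (y, r) \<in> W \<inter> JJ \<Longrightarrow> \<lceil>r\<rceil> = \<lceil>q\<rceil>"
    "\<And>y r k. (y, r) \<in> W \<inter> JJ \<Longrightarrow> k < m \<Longrightarrow> \<forall>i<k. digit y r i = digit x q i
      \<Longrightarrow> digit y r k \<le> digit x q k"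
proof -
  have q: "q > 1" and x: "0 \<le> x" using assms(1) by (auto simp: JJ_def)
  \<comment> \<open>For \<open>k \<notin> K\<close> the bound \<open>digit y r k \<le> digit x q k\<close> comes from the common alphabet.\<close>
  define K where "K = {k. k < m \<and> Suc (digit x q k) < nat \<lceil>q\<rceil>}"
  define U where "U k = {p. 1 < snd p \<and> fst p < digit_sum (digit x q) (snd p) k
      + real (Suc (digit x q k)) / snd p ^ (k + 1)}" for k
  define W where "W = {p. \<lfloor>q\<rfloor> < snd p \<and> snd p < \<lceil>q\<rceil>} \<inter> (\<Inter>k\<in>K. U k)"
  have "open (U k)" for k
    unfolding U_def by (rule open_below_digit_bound)
  moreover have "open {p :: real \<times> real. \<lfloor>q\<rfloor> < snd p \<and> snd p < \<lceil>q\<rceil>}"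
    by (intro open_Collect_conj open_Collect_less continuous_intros)
  moreover have "finite K" unfolding K_def by simp
  ultimately have open_W: "open W" unfolding W_def by blast
  moreover have "(x, q) \<in> U k" if "k \<in> K" for k
  proof -
    have "\<not> digit_sum (digit x q) q k + real (Suc (digit x q k)) / q ^ (k + 1) \<le> x"
      using le_digit_iff[of q x "Suc (digit x q k)" k] q x that unfolding K_def by simp
    then show ?thesis using q unfolding U_def by simp
  qed
  moreover have "\<lfloor>q\<rfloor> < q \<and> q < \<lceil>q\<rceil>"
    using assms(2) by (metis Ints_of_int le_of_int_ceiling of_int_floor_le order_le_less)
  ultimately have xq_W: "(x, q) \<in> W" unfolding W_def by simp
  have ceil: "\<lceil>r\<rceil> = \<lceil>q\<rceil>" if "(y, r) \<in> W \<inter> JJ" for y r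
    using that ceiling_eq_if_between[OF assms(2), of r] unfolding W_def by simp
  have digit_le: "digit y r k \<le> digit x q k"
    if yr: "(y, r) \<in> W \<inter> JJ" and "k < m" and prefix: "\<forall>i<k. digit y r i = digit x q i"
    for y r k
  proof (rule ccontr)
    assume "\<not> ?thesis"
    then have gt: "Suc (digit x q k) \<le> digit y r k" by simp
    have r: "r > 0" and y: "0 \<le> y" using yr by (auto simp: JJ_def)
    have "digit y r k < nat \<lceil>q\<rceil>"
      using digit_less_ceiling[OF r y] ceil[OF yr] by simp
    with gt \<open>k < m\<close> have "k \<in> K" unfolding K_def by simp
    then have "(y, r) \<in> U k" using yr unfolding W_def by blast
    then have above: "y < digit_sum (digit x q) r k + real (Suc (digit x q k)) / r ^ (k + 1)"
      unfolding U_def by simp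
    have "Suc (digit x q k) < nat \<lceil>r\<rceil>"
      using \<open>k \<in> K\<close> ceil[OF yr] unfolding K_def by simp
    then have "digit_sum (digit y r) r k + real (Suc (digit x q k)) / r ^ (k + 1) \<le> y"
      using le_digit_iff[OF r y] gt by blast
    moreover have "digit_sum (digit y r) r k = digit_sum (digit x q) r k"
      unfolding digit_sum_def using prefix by (intro sum.cong) auto
    ultimately show False using above by linarith
  qed
  show ?thesis by (rule that[OF open_W xq_W ceil digit_le])
qed

lemma lex_le_map_upt:
  fixes f g :: "nat \<Rightarrow> nat"
  assumes "\<And>k. k < m \<Longrightarrow> \<forall>i<k. f i = g i \<Longrightarrow> f k \<le> g k"
  shows "lex_le (map f [0..<m]) (map g [0..<m])"
proof (cases "\<forall>k<m. f k = g k")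
  case True
  then have "map f [0..<m] = map g [0..<m]" by simp
  then show ?thesis unfolding lex_le_def by simp
next
  case False
  define k where "k = (LEAST k. k < m \<and> f k \<noteq> g k)"
  have k: "k < m" "f k \<noteq> g k"
    using False LeastI_ex[of "\<lambda>k. k < m \<and> f k \<noteq> g k"] unfolding k_def by auto
  have below: "\<forall>i<k. f i = g i"
    using k not_less_Least[of _ "\<lambda>k. k < m \<and> f k \<noteq> g k"] unfolding k_def
    by (metis (mono_tags, lifting) order.strict_trans)
  have "take k (map f [0..<m]) = take k (map g [0..<m])"
    using k below by (simp add: take_map)
  moreover have "f k < g k" using assms k below by (simp add: order.not_eq_order_implies_strict)
  ultimately show ?thesis unfolding lex_le_def using k by auto
qed

lemma eq_below_if_stepwise:
  fixes f g :: "nat \<Rightarrow> 'a" and k m :: nat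
  assumes "\<And>k. k < m \<Longrightarrow> \<forall>i<k. f i = g i \<Longrightarrow> f k = g k"
  shows "k < m \<Longrightarrow> f k = g k"
proof (induction k rule: less_induct)
  case (less k)
  then have "\<forall>i<k. f i = g i" by simp
  with less.prems show ?case by (rule assms)
qed

lemma greedy_prefix_upper_nhd:
  assumes "(x, q) \<in> JJ" "q \<notin> \<int>"
  shows "\<exists>W. open W \<and> (x, q) \<in> W \<and> (\<forall>y r. (y, r) \<in> W \<inter> JJ \<longrightarrow>
    lex_le (map (\<lambda>i. greedy_digit i y r) [1..<m+1]) (map (\<lambda>i. greedy_digit i x q) [1..<m+1]))"
proof -
  obtain W where W: "open W" "(x, q) \<in> W" "\<And>y r. (y, r) \<in> W \<inter> JJ \<Longrightarrow> \<lceil>r\<rceil> = \<lceil>q\<rceil>"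
    "\<And>y r k. (y, r) \<in> W \<inter> JJ \<Longrightarrow> k < m \<Longrightarrow> \<forall>i<k. digit y r i = digit x q i
      \<Longrightarrow> digit y r k \<le> digit x q k"
    using greedy_digits_upper_nhd[OF assms, where m = m] by blast
  have "lex_le (map (\<lambda>i. greedy_digit i y r) [1..<m+1]) (map (\<lambda>i. greedy_digit i x q) [1..<m+1])"
    if "(y, r) \<in> W \<inter> JJ" for y r
    unfolding map_greedy_digit using W(4)[OF that] by (rule lex_le_map_upt)
  then show ?thesis using W(1,2) by meson
qed

lemma greedy_digit_tendsto_from_above:
  assumes "(x, q) \<in> JJ" "q \<notin> \<int>"
    and above: "\<And>n. (ys n, rs n) \<in> JJ \<and> x \<le> ys n \<and> q \<le> rs n"
    and lim: "(\<lambda>n. (ys n, rs n)) \<longlonglongrightarrow> (x, q)"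
    and "1 \<le> i"
  shows "(\<lambda>n. greedy_digit i (ys n) (rs n)) \<longlonglongrightarrow> greedy_digit i x q"
proof -
  obtain j where i: "i = Suc j" using \<open>1 \<le> i\<close> by (cases i) auto
  have q: "q > 0" and x: "0 \<le> x" using assms(1) by (auto simp: JJ_def)
  obtain W where W: "open W" "(x, q) \<in> W" "\<And>y r. (y, r) \<in> W \<inter> JJ \<Longrightarrow> \<lceil>r\<rceil> = \<lceil>q\<rceil>"
    "\<And>y r k. (y, r) \<in> W \<inter> JJ \<Longrightarrow> k < Suc j \<Longrightarrow> \<forall>l<k. digit y r l = digit x q l
      \<Longrightarrow> digit y r k \<le> digit x q k"
    using greedy_digits_upper_nhd[OF assms(1,2), where m = "Suc j"] by blast
  have "eventually (\<lambda>n. (ys n, rs n) \<in> W) sequentially"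
    using topological_tendstoD[OF lim W(1,2)] .
  then have "eventually (\<lambda>n. digit (ys n) (rs n) j = digit x q j) sequentially"
  proof eventually_elim
    case (elim n)
    have "x \<le> ys n" "q \<le> rs n" using above by blast+
    have yr: "(ys n, rs n) \<in> W \<inter> JJ" using above elim by blast
    show ?case
    proof (rule eq_below_if_stepwise[where f = "digit (ys n) (rs n)" and g = "digit x q" and m = "Suc j"])
      fix k assume k: "k < Suc j" and prefix: "\<forall>l<k. digit (ys n) (rs n) l = digit x q l"
      show "digit (ys n) (rs n) k = digit x q k"
      proof (rule antisym)
        show "digit (ys n) (rs n) k \<le> digit x q k" by (rule W(4)[OF yr k prefix])
        show "digit x q k \<le> digit (ys n) (rs n) k"
          by (rule digit_mono_above[OF x \<open>x \<le> ys n\<close> q \<open>q \<le> rs n\<close> W(3)[OF yr] prefix])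
      qed
    qed simp
  qed
  then show ?thesis unfolding i greedy_digit_Suc by (rule tendsto_eventually)
qed

theorem lemma2p5:
  fixes x q :: real
  assumes "(x, q) \<in> JJ" and "q \<notin> \<int>"
  shows "(\<forall>m::nat. m > 0 \<longrightarrow>
           (\<exists>W. open W \<and> (x, q) \<in> W \<and>
              (\<forall>y r. (y, r) \<in> W \<inter> JJ \<longrightarrow>
                 lex_le (map (\<lambda>i. greedy_digit i y r) [1..<m+1])
                        (map (\<lambda>i. greedy_digit i x q) [1..<m+1]))))
       \<and> (\<forall>(ys :: nat \<Rightarrow> real) (rs :: nat \<Rightarrow> real).
            (\<forall>n. (ys n, rs n) \<in> JJ \<and> ys n \<ge> x \<and> rs n \<ge> q) \<and>
            (\<lambda>n. (ys n, rs n)) \<longlonglongrightarrow> (x, q) \<longrightarrow>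
            (\<forall>i::nat. i \<ge> 1 \<longrightarrow>
               (\<lambda>n. greedy_digit i (ys n) (rs n)) \<longlonglongrightarrow> greedy_digit i x q))"
  using greedy_prefix_upper_nhd[OF assms] greedy_digit_tendsto_from_above[OF assms] by blast

end
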